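(* Let $n$ be even. For any complete oriented flags $F_0,\dots,F_{n+1}$ in $\mathbb{R}^n$, $dE(F_0,\dots,F_{n+1})=0$.
   Context: A complete oriented flag $F$ is a chain $\{0\}=F^0\subset\dots\subset F^n=\mathbb{R}^n$, $\dim F^i=i$, each $F^i$ with a chosen open half-space $(F^i)^+$ bounded by $F^{i-1}$ (equivalently orientations on each $F^i$ compatible as follows: $(v_1,\dots,v_{i-1},x)$ is positive in $F^i$ iff $(v_1,\dots,v_{i-1})$ is positive in $F^{i-1}$ and $x\in(F^i)^+$). For an oriented $k$-dimensional subspace $W$ ($0\le k\le n-1$) and complete oriented flag $F$, let $d$ be the unique $1\le d\le k+1$ with $F^{d-1}\subseteq W$, $F^d\not\subseteq W$; $[W,F]$ is $W+F^d$ oriented by a positive basis of $W$ followed by any $x\in(F^d)^+$. Set $[F_1]=F_1^1$ and $[F_1,\dots,F_k]=[[F_1,\dots,F_{k-1}],F_k]$. For an oriented $n$-dimensional space $U$, $\mathrm{Or}(U)\in\{\pm1\}$ is the sign of its orientation relative to the canonical orientation of $\mathbb{R}^n$. Define $E$ on $(n+1)$-tuples of complete oriented flags by $E(F_0,\dots,F_n)=\prod_{i=0}^n\mathrm{Or}([F_0,\dots,\widehat{F_i},\dots,F_n])\in\{\pm1\}$, and $dE(F_0,\dots,F_{n+1})=\sum_{i=0}^{n+1}(-1)^iE(F_0,\dots,\widehat{F_i},\dots,F_{n+1})$. *)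

theory Defs
  imports "HOL-Analysis.Analysis"
begin

text \<open>Vectors of R^n are elements of real^'n, where the finite index type 'n carries
an enumeration (class enum); the canonical orientation of R^n is the one of the
standard basis listed in the order of that enumeration.\<close>

text \<open>A complete oriented flag: a pair (F, H) where F i is the i-dimensional subspace
F^i and H i is the chosen open half-space (F^i)^+ of F^i bounded by F^(i-1).\<close>
type_synonym 'n oflag = "(nat \<Rightarrow> (real^'n) set) \<times> (nat \<Rightarrow> (real^'n) set)"

definition is_oflag :: "('n::enum) oflag \<Rightarrow> bool" where
  "is_oflag FH \<longleftrightarrow>
     (let F = fst FH; H = snd FH in
        F 0 = {0}
      \<and> (\<forall>i\<le>CARD('n). subspace (F i) \<and> dim (F i) = i)
      \<and> (\<forall>i<CARD('n). F i \<subseteq> F (Suc i))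
      \<and> (\<forall>i\<in>{1..CARD('n)}. \<exists>v\<in>F i - F (i - 1).
            H i = {a + t *\<^sub>R v | a t. a \<in> F (i - 1) \<and> t > 0}))"

text \<open>An oriented subspace is represented by a positive ordered basis (a list of
vectors); the subspace is its span and the orientation the class of the basis.\<close>

definition flag_index :: "('n::enum) oflag \<Rightarrow> (real, 'n) vec list \<Rightarrow> nat" where
  "flag_index FH bs = (LEAST d. \<not> fst FH d \<subseteq> span (set bs))"

text \<open>[W,F]: W + F^d, oriented by a positive basis of W followed by any x in (F^d)^+.\<close>
definition flag_join :: "(real, 'n::enum) vec list \<Rightarrow> 'n oflag \<Rightarrow> (real, 'n) vec list" where
  "flag_join bs FH = bs @ [SOME x. x \<in> snd FH (flag_index FH bs)]"

text \<open>[F_1,...,F_k] = [[F_1,...,F_{k-1}],F_k], with [F_1] = [{0},F_1] = F_1^1.\<close>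
definition flag_bracket :: "('n::enum) oflag list \<Rightarrow> (real, 'n) vec list" where
  "flag_bracket Fs = foldl flag_join [] Fs"

definition enum_pos :: "'n::enum \<Rightarrow> nat" where
  "enum_pos i = (THE k. k < length (enum_class.enum :: 'n list) \<and> enum_class.enum ! k = i)"

definition Or :: "(real, 'n::enum) vec list \<Rightarrow> real" where
  "Or bs = sgn (det ((\<chi> i. \<chi> j. (bs ! enum_pos i) $ j) :: ((real, 'n) vec, 'n) vec))"

definition remove_nth :: "nat \<Rightarrow> 'a list \<Rightarrow> 'a list" where
  "remove_nth i xs = take i xs @ drop (Suc i) xs"

definition E_fun :: "('n::enum) oflag list \<Rightarrow> real" where
  "E_fun Fs = (\<Prod>i<length Fs. Or (flag_bracket (remove_nth i Fs)))"

definition dE_fun :: "('n::enum) oflag list \<Rightarrow> real" where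
  "dE_fun Fs = (\<Sum>i<length Fs. (-1) ^ i * E_fun (remove_nth i Fs))"

end

theory Submission
  imports Defs "HOL-Library.Sublist"
begin

(* Step 1 (perturbation).  A flag F with adapted basis u_0,...,u_{n-1}
   (u_i in the half-space (F^{i+1})^+) determines the curve
   g_F(eta) = sum_i eta^i u_i.  Choosing the parameters of F_0, F_1, ...
   successively small, every n-element subfamily of the curve points has a
   determinant whose sign is Or[F_{i_1},...,F_{i_n}]: expanding the first
   curve point by multilinearity, the lowest order surviving term is exactly
   the vector that the bracket [W,F] adjoins.  So n+2 flags are realised by
   n+2 vectors g_0,...,g_{n+1} in general position, and dE becomes
   sum_j (-1)^j prod_i sgn det(g without g_i, g_j).
   Step 2 (Gale duality).  Deleting g_j leaves n+1 vectors whose Cramer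
   relation has coefficients +-det(g without g_j, g_k).  Linear relations
   among the g's form a 2-dimensional space, so these coefficients are, up to
   the sign pattern (-1)^j, proportional to the 2x2 minors a_j b_k - b_j a_k
   of a planar configuration of n+2 points.
   Step 3 (planar configurations).  For an even number m of pairwise
   independent vectors in the plane, sum_j prod_{k<>j} sgn(a_j b_k - b_j a_k)
   is 0; after reflecting all points into a half-plane this is the vanishing
   of sum_x prod_{y<>x} sgn(x - y) over an even set of reals. *)

lemma length_remove_nth[simp]: "i < length xs \<Longrightarrow> length (remove_nth i xs) = length xs - 1"
  by (simp add: remove_nth_def min_def)

lemma nth_remove_nth:
  assumes "i < length xs" "q < length xs - 1"
  shows "remove_nth i xs ! q = xs ! (if q < i then q else Suc q)"
  using assms by (auto simp: remove_nth_def nth_append min_def)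

lemma map_remove_nth: "remove_nth i (map f xs) = map f (remove_nth i xs)"
  by (simp add: remove_nth_def take_map drop_map)

lemma remove_nth_Suc_Cons: "remove_nth (Suc k) (x # xs) = x # remove_nth k xs"
  by (simp add: remove_nth_def)

lemma remove_nth_0: "remove_nth 0 xs = tl xs"
  by (simp add: remove_nth_def drop_Suc)

lemma remove_nth_0_remove_nth_1: "remove_nth 0 (remove_nth 1 xs) = drop 2 xs"
  by (cases xs) (simp_all add: remove_nth_def)

lemma remove_nth_comm:
  assumes "j < k" "k < length xs"
  shows "remove_nth (k - 1) (remove_nth j xs) = remove_nth j (remove_nth k xs)"
proof (rule nth_equalityI)
  show "length (remove_nth (k - 1) (remove_nth j xs)) = length (remove_nth j (remove_nth k xs))"
    using assms by simp
  fix q assume "q < length (remove_nth (k - 1) (remove_nth j xs))"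
  then have "q < length xs - 2" using assms by simp
  then show "remove_nth (k - 1) (remove_nth j xs) ! q = remove_nth j (remove_nth k xs) ! q"
    using assms by (auto simp: nth_remove_nth)
qed

lemma subseq_remove_nth: "subseq (remove_nth i xs) xs"
proof -
  have "drop i xs = take 1 (drop i xs) @ drop (Suc i) xs"
    by (metis append_take_drop_id drop_drop plus_1_eq_Suc)
  then have "subseq (drop (Suc i) xs) (drop i xs)"
    by (metis subseq_drop_many subseq_order.refl)
  then have "subseq (take i xs @ drop (Suc i) xs) (take i xs @ drop i xs)"
    by (simp only: subseq_append')
  then show ?thesis by (simp add: remove_nth_def)
qed

definition skip_index :: "nat \<Rightarrow> nat \<Rightarrow> nat" where
  "skip_index j i = (if i < j then i else Suc i)"

lemma bij_skip_index:
  assumes "j < Suc M"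
  shows "bij_betw (skip_index j) {..<M} ({..<Suc M} - {j})"
  unfolding bij_betw_def
proof
  show "inj_on (skip_index j) {..<M}" by (auto simp: inj_on_def skip_index_def split: if_splits)
  show "skip_index j ` {..<M} = {..<Suc M} - {j}"
  proof
    show "skip_index j ` {..<M} \<subseteq> {..<Suc M} - {j}" by (auto simp: skip_index_def)
    show "{..<Suc M} - {j} \<subseteq> skip_index j ` {..<M}"
    proof
      fix k assume k: "k \<in> {..<Suc M} - {j}"
      define i where "i = (if k < j then k else k - 1)"
      have "i < M" "skip_index j i = k" using k assms by (auto simp: i_def skip_index_def)
      then show "k \<in> skip_index j ` {..<M}" by blast
    qed
  qed
qed

lemma nth_remove_nth_skip_index:
  assumes "j < length xs" "i < length xs - 1"
  shows "remove_nth j xs ! i = xs ! skip_index j i"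
  using assms by (simp add: nth_remove_nth skip_index_def)

section \<open>Determinants of lists of vectors\<close>

text \<open>Rows of a matrix indexed by the enumerated type 'n are listed in the order of the
  enumeration; enum_pos and enum_at translate between indices and list positions.\<close>

abbreviation enum_at :: "nat \<Rightarrow> 'n::enum" where
  "enum_at k \<equiv> (enum_class.enum :: 'n list) ! k"

lemma length_enum: "length (enum_class.enum :: 'n::enum list) = CARD('n)"
  by (simp add: card_UNIV_length_enum)

lemma enum_pos_enum_at: "k < CARD('n) \<Longrightarrow> enum_pos (enum_at k :: 'n::enum) = k"
  unfolding enum_pos_def
  by (rule the_equality) (auto simp: length_enum nth_eq_iff_index_eq enum_distinct)

lemma enum_pos_less_and_inverse: "enum_pos (i::'n::enum) < CARD('n) \<and> enum_at (enum_pos i) = i"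
proof -
  have "i \<in> set enum_class.enum" by (simp add: in_enum)
  then obtain k where k: "k < length (enum_class.enum :: 'n list)" "enum_class.enum ! k = i"
    by (auto simp: in_set_conv_nth)
  then have "enum_pos i = k" using enum_pos_enum_at[of k, where 'n='n] by (simp add: length_enum)
  then show ?thesis using k by (simp add: length_enum)
qed

lemma enum_pos_less: "enum_pos (i::'n::enum) < CARD('n)"
  using enum_pos_less_and_inverse by blast

lemma enum_at_enum_pos: "enum_at (enum_pos (i::'n::enum)) = i"
  using enum_pos_less_and_inverse by blast

lemma sum_enum_pos: "(\<Sum>i\<in>UNIV. f (enum_pos (i::'n::enum))) = (\<Sum>k<CARD('n). f k)"
proof -
  have "bij_betw (enum_pos :: 'n \<Rightarrow> nat) UNIV {..<CARD('n)}"
    unfolding bij_betw_def inj_on_def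
    by (auto simp: enum_pos_less image_iff) (metis enum_at_enum_pos, metis enum_pos_enum_at)
  then show ?thesis using sum.reindex_bij_betw by blast
qed

definition rows_det :: "(real,'n::enum) vec list \<Rightarrow> real" where
  "rows_det bs = det (\<chi> i. bs ! enum_pos i)"

lemma Or_eq_sgn_rows_det: "Or bs = sgn (rows_det bs)"
  unfolding Or_def rows_det_def by (simp add: vec_lambda_eta)

lemma rows_det_update:
  fixes xs :: "(real,'n::enum) vec list"
  assumes "p < CARD('n)" "length xs = CARD('n)"
  shows "rows_det (xs[p:=v]) = det (\<chi> i. if i = enum_at p then v else xs ! enum_pos i)"
proof -
  have "((\<chi> i. (xs[p:=v]) ! enum_pos i) :: ((real,'n) vec,'n) vec)
      = (\<chi> i. if i = enum_at p then v else xs ! enum_pos i)"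
    using assms enum_pos_enum_at[of p, where 'n='n]
    by (auto simp: vec_eq_iff nth_list_update enum_at_enum_pos enum_pos_less)
  then show ?thesis unfolding rows_det_def by simp
qed

lemma rows_det_update_linear:
  fixes xs :: "(real,'n::enum) vec list"
  assumes "p < CARD('n)" "length xs = CARD('n)"
  shows "linear (\<lambda>v. rows_det (xs[p:=v]))"
proof (rule linearI)
  fix v w :: "(real,'n) vec" and c :: real
  show "rows_det (xs[p:=v+w]) = rows_det (xs[p:=v]) + rows_det (xs[p:=w])"
    unfolding rows_det_update[OF assms]
    using det_row_add[of "enum_at p" "\<lambda>_. v" "\<lambda>_. w" "\<lambda>i. xs ! enum_pos i"] by simp
  show "rows_det (xs[p:=c *\<^sub>R v]) = c *\<^sub>R rows_det (xs[p:=v])"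
    unfolding rows_det_update[OF assms]
    using det_row_mul[of "enum_at p" c "\<lambda>_. v" "\<lambda>i. xs ! enum_pos i"]
    unfolding scalar_mult_eq_scaleR by simp
qed

lemma rows_det_slot_linear:
  fixes bs X :: "(real,'n::enum) vec list"
  assumes "length bs + Suc (length X) = CARD('n)"
  shows "linear (\<lambda>v. rows_det (bs @ v # X))"
  using rows_det_update_linear[of "length bs" "bs @ 0 # X"] assms by simp

lemma rows_det_slot_sum:
  fixes bs X :: "(real,'n::enum) vec list"
  assumes "length bs + Suc (length X) = CARD('n)"
  shows "rows_det (bs @ (\<Sum>l\<in>S. c l *\<^sub>R w l) # X) = (\<Sum>l\<in>S. c l * rows_det (bs @ w l # X))"
  by (simp add: linear_sum[OF rows_det_slot_linear[OF assms]] linear_cmul[OF rows_det_slot_linear[OF assms]])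

lemma rows_det_repeated:
  fixes xs :: "(real,'n::enum) vec list"
  assumes "p < CARD('n)" "q < CARD('n)" "p \<noteq> q" "length xs = CARD('n)" "xs ! p = xs ! q"
  shows "rows_det xs = 0"
  unfolding rows_det_def
proof (rule det_identical_rows[of "enum_at p" "enum_at q"])
  show "enum_at p \<noteq> (enum_at q :: 'n)"
    using assms enum_pos_enum_at[of p, where 'n='n] enum_pos_enum_at[of q, where 'n='n] by metis
  show "row (enum_at p) ((\<chi> i. xs ! enum_pos i)::((real,'n) vec,'n) vec)
      = row (enum_at q) ((\<chi> i. xs ! enum_pos i)::((real,'n) vec,'n) vec)"
    using assms enum_pos_enum_at[of p, where 'n='n] enum_pos_enum_at[of q, where 'n='n]
    by (simp add: row_def vec_lambda_eta)
qed

lemma rows_det_swap: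
  fixes xs :: "(real,'n::enum) vec list"
  assumes "p < CARD('n)" "q < CARD('n)" "p \<noteq> q" "length xs = CARD('n)"
  shows "rows_det (xs[p:=b, q:=a]) = - rows_det (xs[p:=a, q:=b])"
proof -
  define f where "f v w = rows_det (xs[p:=v, q:=w])" for v w
  have lin2: "linear (f v)" for v
    unfolding f_def using assms by (intro rows_det_update_linear) auto
  have lin1: "linear (\<lambda>v. f v w)" for w
  proof -
    have "f v w = rows_det ((xs[q:=w])[p:=v])" for v
      unfolding f_def using assms by (simp add: list_update_swap)
    then show ?thesis using assms rows_det_update_linear[of p "xs[q:=w]"] by simp
  qed
  have diag: "f v v = 0" for v
    unfolding f_def using assms by (intro rows_det_repeated[of p q]) auto
  have "0 = f (a+b) (a+b)" using diag by simp
  also have "\<dots> = f a a + f a b + (f b a + f b b)"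
    using linear_add[OF lin1] linear_add[OF lin2] by simp
  finally show ?thesis using diag unfolding f_def by simp
qed

lemma rows_det_move:
  fixes x :: "(real,'n::enum) vec"
  assumes "length (pre @ x # ys @ zs) = CARD('n)"
  shows "rows_det (pre @ x # ys @ zs) = (-1)^length ys * rows_det (pre @ ys @ x # zs)"
  using assms
proof (induction ys arbitrary: pre)
  case Nil then show ?case by simp
next
  case (Cons y ys)
  let ?L = "pre @ y # x # ys @ zs"
  have "rows_det (?L[length pre := x, Suc (length pre) := y])
      = - rows_det (?L[length pre := y, Suc (length pre) := x])"
    by (rule rows_det_swap) (use Cons.prems in auto)
  moreover have "?L[length pre := x, Suc (length pre) := y] = pre @ x # y # ys @ zs"
    by (simp add: list_update_append)
  moreover have "?L[length pre := y, Suc (length pre) := x] = ?L"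
    by (simp add: list_update_append)
  moreover have "rows_det ((pre @ [y]) @ x # ys @ zs) = (-1)^length ys * rows_det ((pre @ [y]) @ ys @ x # zs)"
    by (rule Cons.IH) (use Cons.prems in simp)
  ultimately show ?case by simp
qed

lemma rows_det_move_to_front:
  fixes xs :: "(real,'n::enum) vec list"
  assumes "length xs = CARD('n)" "p < length xs"
  shows "rows_det (xs ! p # remove_nth p xs) = (-1)^p * rows_det xs"
proof -
  have xs: "xs = take p xs @ xs ! p # drop (Suc p) xs" using assms by (simp add: id_take_nth_drop)
  have "rows_det ([] @ xs ! p # take p xs @ drop (Suc p) xs)
      = (-1)^length (take p xs) * rows_det ([] @ take p xs @ xs ! p # drop (Suc p) xs)"
    by (rule rows_det_move) (use assms xs in \<open>simp add: min_def\<close>)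
  then show ?thesis using assms xs by (simp add: remove_nth_def min_def)
qed

lemma rows_det_slot_in_span:
  fixes bs X :: "(real,'n::enum) vec list"
  assumes "length bs + Suc (length X) = CARD('n)" "v \<in> span (set bs)"
  shows "rows_det (bs @ v # X) = 0"
proof -
  let ?f = "\<lambda>v. rows_det (bs @ v # X)"
  have "set bs \<subseteq> {w. ?f w = 0}"
  proof
    fix w assume "w \<in> set bs"
    then obtain k where k: "k < length bs" "bs ! k = w" by (auto simp: in_set_conv_nth)
    show "w \<in> {w. ?f w = 0}"
      by (rule CollectI, rule rows_det_repeated[of k "length bs"]) (use assms k in \<open>auto simp: nth_append\<close>)
  qed
  then show ?thesis
    using linear_eq_0_on_span[OF rows_det_slot_linear[OF assms(1)] _ assms(2)] by blast
qed

lemma rows_det_nonzero_iff: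
  fixes xs :: "(real,'n::enum) vec list"
  shows "rows_det xs \<noteq> 0 \<longleftrightarrow> (\<forall>c. (\<Sum>k<CARD('n). c k *\<^sub>R xs ! k) = 0 \<longrightarrow> (\<forall>k<CARD('n). c k = 0))"
proof -
  let ?A = "(\<chi> i. xs ! enum_pos i)::((real,'n) vec,'n) vec"
  have rows: "sum (\<lambda>i::'n. c i *s row i ?A) UNIV = (\<Sum>k<CARD('n). c (enum_at k) *\<^sub>R xs ! k)" for c
    using sum_enum_pos[of "\<lambda>k. c (enum_at k) *\<^sub>R xs ! k", where 'n='n]
    by (simp add: row_def vec_lambda_eta scalar_mult_eq_scaleR enum_at_enum_pos)
  have "rows_det xs \<noteq> 0 \<longleftrightarrow> (\<exists>B. ?A ** B = mat 1)"
    unfolding rows_det_def by (metis invertible_det_nz invertible_right_inverse)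
  also have "\<dots> \<longleftrightarrow> (\<forall>c. sum (\<lambda>i::'n. c i *s row i ?A) UNIV = 0 \<longrightarrow> (\<forall>i. c i = 0))"
    by (rule matrix_right_invertible_independent_rows)
  also have "\<dots> \<longleftrightarrow> (\<forall>c. (\<Sum>k<CARD('n). c k *\<^sub>R xs ! k) = 0 \<longrightarrow> (\<forall>k<CARD('n). c k = 0))"
    unfolding rows
  proof (intro iffI allI impI)
    fix c :: "nat \<Rightarrow> real" and k
    assume H: "\<forall>c. (\<Sum>k<CARD('n). c (enum_at k) *\<^sub>R xs ! k) = 0 \<longrightarrow> (\<forall>i::'n. c i = 0)"
      and s: "(\<Sum>k<CARD('n). c k *\<^sub>R xs ! k) = 0" and k: "k < CARD('n)"
    have "(\<Sum>k<CARD('n). c (enum_pos (enum_at k :: 'n)) *\<^sub>R xs ! k) = (\<Sum>k<CARD('n). c k *\<^sub>R xs ! k)"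
      by (rule sum.cong) (simp_all add: enum_pos_enum_at)
    then have "\<forall>i::'n. c (enum_pos i) = 0"
      using H[rule_format, of "\<lambda>i. c (enum_pos i)"] s by simp
    then show "c k = 0" using enum_pos_enum_at[of k, where 'n='n] k by metis
  next
    fix c :: "'n \<Rightarrow> real" and i
    assume H: "\<forall>c. (\<Sum>k<CARD('n). c k *\<^sub>R xs ! k) = 0 \<longrightarrow> (\<forall>k<CARD('n). c k = 0)"
      and s: "(\<Sum>k<CARD('n). c (enum_at k) *\<^sub>R xs ! k) = 0"
    have "\<forall>k<CARD('n). c (enum_at k) = 0" using H[rule_format, of "\<lambda>k. c (enum_at k)"] s by simp
    then show "c i = 0" using enum_pos_less[of i] enum_at_enum_pos[of i] by metis
  qed
  finally show ?thesis .
qed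

lemma rows_det_nonzero_spans:
  fixes xs :: "(real,'n::enum) vec list"
  assumes "rows_det xs \<noteq> 0"
  shows "\<exists>c. v = (\<Sum>k<CARD('n). c k *\<^sub>R xs ! k)"
proof -
  let ?A = "(\<chi> i. xs ! enum_pos i)::((real,'n) vec,'n) vec"
  have "\<exists>B. B ** ?A = mat 1"
    using assms unfolding rows_det_def by (metis invertible_det_nz invertible_left_inverse)
  then have "\<exists>B. transpose ?A ** B = mat 1" by (simp add: right_invertible_transpose)
  then have "surj ((*v) (transpose ?A))" using matrix_right_invertible_surjective by blast
  then obtain x where "v = transpose ?A *v x" by (metis surjD)
  also have "\<dots> = sum (\<lambda>i. (x$i) *s row i ?A) UNIV" by (simp add: matrix_mult_sum)
  also have "\<dots> = (\<Sum>i\<in>UNIV. (\<lambda>k. x $ (enum_at k) *\<^sub>R xs ! k) (enum_pos (i::'n)))"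
    by (simp add: row_def vec_lambda_eta scalar_mult_eq_scaleR enum_at_enum_pos)
  also have "\<dots> = (\<Sum>k<CARD('n). x $ (enum_at k) *\<^sub>R xs ! k)" by (rule sum_enum_pos)
  finally show ?thesis by (rule exI[of _ "\<lambda>k. x $ (enum_at k)"])
qed

definition lin_indep_list :: "(real,'n::enum) vec list \<Rightarrow> bool" where
  "lin_indep_list xs \<longleftrightarrow> (\<forall>c. (\<Sum>k<length xs. c k *\<^sub>R xs ! k) = 0 \<longrightarrow> (\<forall>k<length xs. c k = 0))"

lemma lin_indep_list_Nil: "lin_indep_list []"
  by (simp add: lin_indep_list_def)

lemma lin_indep_list_snoc:
  assumes "lin_indep_list xs" "v \<notin> span (set xs)"
  shows "lin_indep_list (xs @ [v])"
  unfolding lin_indep_list_def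
proof (intro allI impI)
  fix c :: "nat \<Rightarrow> real" and k
  assume s: "(\<Sum>k<length (xs @ [v]). c k *\<^sub>R (xs @ [v]) ! k) = 0" and k: "k < length (xs @ [v])"
  have split: "(\<Sum>k<length (xs @ [v]). c k *\<^sub>R (xs @ [v]) ! k)
      = (\<Sum>k<length xs. c k *\<^sub>R xs ! k) + c (length xs) *\<^sub>R v"
    by (simp add: nth_append)
  have last: "c (length xs) = 0"
  proof (rule ccontr)
    assume nz: "c (length xs) \<noteq> 0"
    have "c (length xs) *\<^sub>R v = - (\<Sum>k<length xs. c k *\<^sub>R xs ! k)"
      using s split by (simp add: eq_neg_iff_add_eq_0 add.commute)
    moreover have "v = (1 / c (length xs)) *\<^sub>R (c (length xs) *\<^sub>R v)" using nz by simp
    ultimately have "v = (- 1 / c (length xs)) *\<^sub>R (\<Sum>k<length xs. c k *\<^sub>R xs ! k)" by simp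
    also have "\<dots> \<in> span (set xs)"
      by (intro span_mul span_sum span_base) auto
    finally show False using assms by simp
  qed
  then have "(\<Sum>k<length xs. c k *\<^sub>R xs ! k) = 0" using s split by simp
  then have "\<forall>k<length xs. c k = 0" using assms unfolding lin_indep_list_def by blast
  then show "c k = 0" using k last by (cases "k = length xs") auto
qed

lemma rows_det_nonzero_iff_independent:
  fixes xs :: "(real,'n::enum) vec list"
  assumes "length xs = CARD('n)"
  shows "rows_det xs \<noteq> 0 \<longleftrightarrow> lin_indep_list xs"
  unfolding rows_det_nonzero_iff lin_indep_list_def assms ..

section \<open>The Cramer relation\<close>

lemma cramer_rule:
  fixes t :: "(real,'n::enum) vec list"
  assumes lt: "length t = CARD('n)" and k: "k < CARD('n)"
  shows "rows_det ((\<Sum>l<CARD('n). c l *\<^sub>R t ! l) # remove_nth k t) = c k * ((-1)^k * rows_det t)"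
proof -
  let ?R = "remove_nth k t"
  have lR: "length [] + Suc (length ?R) = CARD('n)" using k lt by simp
  have "rows_det ((\<Sum>l<CARD('n). c l *\<^sub>R t ! l) # ?R) = (\<Sum>l<CARD('n). c l * rows_det (t ! l # ?R))"
    using rows_det_slot_sum[OF lR] by simp
  also have "\<dots> = (\<Sum>l<CARD('n). if l = k then c k * ((-1)^k * rows_det t) else 0)"
  proof (rule sum.cong[OF refl])
    fix l assume l: "l \<in> {..<CARD('n)}"
    show "c l * rows_det (t ! l # ?R) = (if l = k then c k * ((-1)^k * rows_det t) else 0)"
    proof (cases "l = k")
      case True then show ?thesis using rows_det_move_to_front[of t k] lt k by simp
    next
      case False
      define p where "p = (if l < k then l else l - 1)"
      have p: "p < CARD('n) - 1" using l k False by (auto simp: p_def)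
      have "?R ! p = t ! l" using False l k lt p by (auto simp: nth_remove_nth p_def)
      then have "rows_det (t ! l # ?R) = 0"
        by (intro rows_det_repeated[of 0 "Suc p"]) (use p lR lt in auto)
      then show ?thesis using False by simp
    qed
  qed
  also have "\<dots> = c k * ((-1)^k * rows_det t)" using k by simp
  finally show ?thesis .
qed

text \<open>Any n+1 vectors h_0,...,h_n in R^n satisfy the Cramer relation
  sum_i (-1)^i det(h without h_i) h_i = 0.  We need it when the last n vectors form a basis,
  where it follows from Cramer's rule for the coordinates of h_0.\<close>

lemma cramer_relation:
  fixes hs :: "(real,'n::enum) vec list"
  assumes len: "length hs = Suc CARD('n)" and nz: "rows_det (remove_nth 0 hs) \<noteq> 0"
  shows "(\<Sum>i<Suc CARD('n). ((-1)^i * rows_det (remove_nth i hs)) *\<^sub>R hs ! i) = 0"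
proof -
  obtain h0 t where ht: "hs = h0 # t" using len by (cases hs) auto
  have lt: "length t = CARD('n)" using len ht by simp
  have Dt: "rows_det t \<noteq> 0" using nz ht by (simp add: remove_nth_0)
  obtain c where c: "h0 = (\<Sum>k<CARD('n). c k *\<^sub>R t ! k)" using rows_det_nonzero_spans[OF Dt] by blast
  have coord: "rows_det (remove_nth (Suc k) hs) = c k * ((-1)^k * rows_det t)" if "k < CARD('n)" for k
    using cramer_rule[OF lt that, of c] ht c by (simp add: remove_nth_Suc_Cons)
  have "(\<Sum>i<Suc CARD('n). ((-1)^i * rows_det (remove_nth i hs)) *\<^sub>R hs ! i) =
        rows_det t *\<^sub>R h0 + (\<Sum>k<CARD('n). ((-1)^(Suc k) * rows_det (remove_nth (Suc k) hs)) *\<^sub>R t ! k)"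
    unfolding sum.lessThan_Suc_shift using ht by (simp add: remove_nth_0)
  also have "(\<Sum>k<CARD('n). ((-1)^(Suc k) * rows_det (remove_nth (Suc k) hs)) *\<^sub>R t ! k) =
        (\<Sum>k<CARD('n). (- rows_det t) *\<^sub>R (c k *\<^sub>R t ! k))"
    by (rule sum.cong[OF refl]) (simp add: coord)
  also have "\<dots> = - (rows_det t *\<^sub>R h0)" unfolding c by (simp add: scaleR_sum_right sum_negf)
  finally show ?thesis by simp
qed

section \<open>Complete oriented flags and their brackets\<close>

lemma oflag_facts:
  fixes FH :: "('n::enum) oflag"
  assumes "is_oflag FH"
  shows "fst FH 0 = {0}"
    "\<And>i. i \<le> CARD('n) \<Longrightarrow> subspace (fst FH i) \<and> dim (fst FH i) = i"
    "\<And>i. i < CARD('n) \<Longrightarrow> fst FH i \<subseteq> fst FH (Suc i)"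
    "\<And>i. i \<in> {1..CARD('n)} \<Longrightarrow> \<exists>v\<in>fst FH i - fst FH (i - 1).
            snd FH i = {a + t *\<^sub>R v | a t. a \<in> fst FH (i - 1) \<and> t > 0}"
  using assms unfolding is_oflag_def Let_def by auto

text \<open>The adapted basis of a flag: u_d is the vector chosen (by the same choice as in
  flag_join) in the half-space (F^{d+1})^+.\<close>

definition flag_basis :: "('n::enum) oflag \<Rightarrow> (real,'n) vec list" where
  "flag_basis FH = map (\<lambda>d. SOME x. x \<in> snd FH (Suc d)) [0..<CARD('n)]"

lemma length_flag_basis[simp]: "length (flag_basis (FH::('n::enum) oflag)) = CARD('n)"
  by (simp add: flag_basis_def)

lemma flag_basis_mem:
  fixes FH :: "('n::enum) oflag"
  assumes "is_oflag FH" "d < CARD('n)"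
  shows "flag_basis FH ! d \<in> fst FH (Suc d) - fst FH d"
proof -
  note ff = oflag_facts[OF assms(1)]
  obtain v where v: "v \<in> fst FH (Suc d) - fst FH d"
    "snd FH (Suc d) = {a + t *\<^sub>R v | a t. a \<in> fst FH d \<and> t > 0}"
    using ff(4)[of "Suc d"] assms by auto
  have sd: "subspace (fst FH d)" "subspace (fst FH (Suc d))"
    using ff(2)[of d] ff(2)[of "Suc d"] assms by auto
  have "\<exists>a t. 0 + 1 *\<^sub>R v = a + t *\<^sub>R v \<and> a \<in> fst FH d \<and> t > (0::real)"
    using subspace_0[OF sd(1)] by (intro exI[of _ 0] exI[of _ "1::real"]) simp
  then have "0 + 1 *\<^sub>R v \<in> snd FH (Suc d)" unfolding v(2) by blast
  then have "(SOME x. x \<in> snd FH (Suc d)) \<in> snd FH (Suc d)" by (rule someI)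
  then obtain a t where at: "flag_basis FH ! d = a + t *\<^sub>R v" "a \<in> fst FH d" "t > 0"
    using v assms by (auto simp: flag_basis_def)
  have "a \<in> fst FH (Suc d)" using at ff(3)[of d] assms by auto
  then have in_Suc: "flag_basis FH ! d \<in> fst FH (Suc d)"
    using at v sd by (simp add: subspace_add subspace_scale)
  have "flag_basis FH ! d \<notin> fst FH d"
  proof
    assume "flag_basis FH ! d \<in> fst FH d"
    then have "flag_basis FH ! d - a \<in> fst FH d" using at sd subspace_diff by blast
    then have "(1/t) *\<^sub>R (flag_basis FH ! d - a) \<in> fst FH d" using sd subspace_scale by blast
    moreover have "(1/t) *\<^sub>R (flag_basis FH ! d - a) = v" using at by simp
    ultimately show False using v by simp
  qed
  then show ?thesis using in_Suc by simp
qed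

lemma flag_eq_span_basis:
  fixes FH :: "('n::enum) oflag"
  assumes "is_oflag FH" "d \<le> CARD('n)"
  shows "fst FH d = span (set (take d (flag_basis FH)))"
  using assms(2)
proof (induction d)
  case 0
  then show ?case using oflag_facts(1)[OF assms(1)] by simp
next
  case (Suc d)
  note ff = oflag_facts[OF assms(1)]
  let ?S = "set (take d (flag_basis FH))" and ?u = "flag_basis FH ! d"
  have IH: "fst FH d = span ?S" using Suc by simp
  have u: "?u \<in> fst FH (Suc d) - fst FH d" using flag_basis_mem[OF assms(1), of d] Suc.prems by simp
  have sd: "dim (fst FH d) = d" "subspace (fst FH (Suc d))" "dim (fst FH (Suc d)) = Suc d"
    using ff(2)[of d] ff(2)[of "Suc d"] Suc by auto
  have take_Suc: "set (take (Suc d) (flag_basis FH)) = insert ?u ?S"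
    using Suc by (simp add: take_Suc_conv_app_nth)
  have "?S \<subseteq> span ?S" by (rule span_superset)
  then have "?S \<subseteq> fst FH (Suc d)" using IH ff(3)[of d] Suc by auto
  then have sub: "span (insert ?u ?S) \<subseteq> fst FH (Suc d)"
    using u sd(2) by (intro span_minimal) auto
  have "dim (span (insert ?u ?S)) = Suc d"
    using u IH sd by (simp add: dim_insert)
  then have "span (insert ?u ?S) = fst FH (Suc d)"
    using sub sd by (intro subspace_dim_equal) auto
  then show ?case using take_Suc by simp
qed

text \<open>Fewer than n vectors cannot span F^n = R^n, so some adapted basis vector lies outside
  their span.\<close>

lemma flag_basis_not_in_span:
  fixes FH :: "('n::enum) oflag"
  assumes "is_oflag FH" "length bs < CARD('n)"
  shows "\<exists>j<CARD('n). flag_basis FH ! j \<notin> span (set bs)"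
proof (rule ccontr)
  assume "\<not> ?thesis"
  then have "set (take CARD('n) (flag_basis FH)) \<subseteq> span (set bs)"
    by (metis in_set_conv_nth length_flag_basis subsetI take_all_iff order.refl)
  then have "fst FH CARD('n) \<subseteq> span (set bs)"
    using flag_eq_span_basis[OF assms(1), of "CARD('n)"] by (simp add: span_minimal)
  then have "dim (fst FH CARD('n)) \<le> card (set bs)"
    by (intro dim_le_card) auto
  also have "\<dots> \<le> length bs" by (rule card_length)
  finally show False using oflag_facts(2)[OF assms(1), of "CARD('n)"] assms(2) by simp
qed

lemma flag_join_eq_basis_vector:
  fixes FH :: "('n::enum) oflag"
  assumes "is_oflag FH" "length bs < CARD('n)"
  shows "\<exists>j<CARD('n). flag_basis FH ! j \<notin> span (set bs) \<and> (\<forall>i<j. flag_basis FH ! i \<in> span (set bs))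
          \<and> flag_join bs FH = bs @ [flag_basis FH ! j]"
proof -
  note ex = flag_basis_not_in_span[OF assms]
  define j where "j = (LEAST j. flag_basis FH ! j \<notin> span (set bs))"
  have "\<exists>j. flag_basis FH ! j \<notin> span (set bs)" using ex by blast
  then have j_out: "flag_basis FH ! j \<notin> span (set bs)" unfolding j_def by (rule LeastI_ex)
  have j_first: "\<forall>i<j. flag_basis FH ! i \<in> span (set bs)"
    unfolding j_def using not_less_Least by blast
  obtain j' where j': "j' < CARD('n)" "flag_basis FH ! j' \<notin> span (set bs)" using ex by blast
  have "j \<le> j'" unfolding j_def by (rule Least_le) (rule j'(2))
  then have j_less: "j < CARD('n)" using j' by simp
  have "flag_index FH bs = Suc j"
    unfolding flag_index_def
  proof (rule Least_equality)
    have "flag_basis FH ! j \<in> fst FH (Suc j)"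
      using flag_eq_span_basis[OF assms(1), of "Suc j"] j_less
      by (simp add: take_Suc_conv_app_nth span_base)
    then show "\<not> fst FH (Suc j) \<subseteq> span (set bs)" using j_out by blast
  next
    fix d assume nd: "\<not> fst FH d \<subseteq> span (set bs)"
    show "Suc j \<le> d"
    proof (rule ccontr)
      assume "\<not> Suc j \<le> d"
      then have dj: "d \<le> j" by simp
      have "set (take d (flag_basis FH)) \<subseteq> span (set bs)"
      proof
        fix x assume "x \<in> set (take d (flag_basis FH))"
        then obtain i where "i < d" "x = flag_basis FH ! i" using dj j_less by (auto simp: in_set_conv_nth)
        then show "x \<in> span (set bs)" using j_first dj by auto
      qed
      then have "fst FH d \<subseteq> span (set bs)"
        using flag_eq_span_basis[OF assms(1), of d] dj j_less by (simp add: span_minimal)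
      then show False using nd by simp
    qed
  qed
  then have "flag_join bs FH = bs @ [flag_basis FH ! j]"
    unfolding flag_join_def using j_less by (simp add: flag_basis_def)
  then show ?thesis using j_less j_out j_first by blast
qed

lemma length_foldl_flag_join[simp]: "length (foldl flag_join bs Fs) = length bs + length Fs"
  by (induction Fs arbitrary: bs) (auto simp: flag_join_def)

lemma flag_join_independent:
  fixes FH :: "('n::enum) oflag"
  assumes "is_oflag FH" "lin_indep_list bs" "length bs < CARD('n)"
  shows "lin_indep_list (flag_join bs FH)"
proof -
  obtain j where "flag_basis FH ! j \<notin> span (set bs)" "flag_join bs FH = bs @ [flag_basis FH ! j]"
    using flag_join_eq_basis_vector[OF assms(1,3)] by blast
  then show ?thesis using lin_indep_list_snoc[OF assms(2)] by simp
qed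

lemma foldl_flag_join_independent:
  fixes Fs :: "('n::enum) oflag list"
  assumes "lin_indep_list bs" "\<forall>F\<in>set Fs. is_oflag F" "length bs + length Fs \<le> CARD('n)"
  shows "lin_indep_list (foldl flag_join bs Fs)"
  using assms
proof (induction Fs arbitrary: bs)
  case Nil then show ?case by simp
next
  case (Cons F Fs)
  have "lin_indep_list (flag_join bs F)"
    using Cons.prems by (intro flag_join_independent) auto
  then show ?case using Cons.IH[of "flag_join bs F"] Cons.prems by (simp add: flag_join_def)
qed

lemma foldl_flag_join_det_nonzero:
  fixes Fs :: "('n::enum) oflag list"
  assumes "lin_indep_list bs" "\<forall>F\<in>set Fs. is_oflag F" "length bs + length Fs = CARD('n)"
  shows "rows_det (foldl flag_join bs Fs) \<noteq> 0"
  using foldl_flag_join_independent[OF assms(1,2)] assms(3)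
  by (simp add: rows_det_nonzero_iff_independent)

section \<open>Realising flags by vectors in general position\<close>

lemma eventually_sgn_poly_at_right:
  fixes c :: "nat \<Rightarrow> real"
  assumes "j0 < M" "\<forall>j<j0. c j = 0" "c j0 \<noteq> 0"
  shows "eventually (\<lambda>\<eta>. sgn (\<Sum>j<M. \<eta>^j * c j) = sgn (c j0)) (at_right 0)"
proof -
  define h where "h \<eta> = (\<Sum>j<M. \<eta>^(j - j0) * (if j0 \<le> j then c j else 0))" for \<eta> :: real
  have factor: "(\<Sum>j<M. \<eta>^j * c j) = \<eta>^j0 * h \<eta>" for \<eta>
    unfolding h_def sum_distrib_left
  proof (rule sum.cong)
    fix j assume "j \<in> {..<M}"
    show "\<eta>^j * c j = \<eta>^j0 * (\<eta>^(j - j0) * (if j0 \<le> j then c j else 0))"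
    proof (cases "j0 \<le> j")
      case True
      then have "\<eta>^j = \<eta>^j0 * \<eta>^(j - j0)" by (metis le_add_diff_inverse power_add)
      then show ?thesis using True by simp
    next
      case False then show ?thesis using assms by simp
    qed
  qed simp
  have lim: "(h \<longlongrightarrow> h 0) (at_right 0)"
    unfolding h_def by (intro tendsto_intros)
  have "h 0 = (\<Sum>j<M. if j = j0 then c j0 else 0)"
    unfolding h_def by (rule sum.cong) auto
  then have h0: "h 0 = c j0" using assms by simp
  have "eventually (\<lambda>\<eta>. sgn (h \<eta>) = sgn (c j0)) (at_right 0)"
  proof (cases "c j0 > 0")
    case True
    have "eventually (\<lambda>\<eta>. 0 < h \<eta>) (at_right 0)" using order_tendstoD(1)[OF lim] True h0 by simp
    then show ?thesis by eventually_elim (use True in simp)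
  next
    case False
    then have neg: "c j0 < 0" using assms by simp
    have "eventually (\<lambda>\<eta>. h \<eta> < 0) (at_right 0)" using order_tendstoD(2)[OF lim] neg h0 by simp
    then show ?thesis by eventually_elim (use neg in simp)
  qed
  moreover have "eventually (\<lambda>\<eta>::real. 0 < \<eta>) (at_right 0)" by (rule eventually_at_right_less)
  ultimately show ?thesis
    by eventually_elim (simp add: factor sgn_mult)
qed

definition flag_curve :: "('n::enum) oflag \<times> real \<Rightarrow> (real,'n) vec" where
  "flag_curve P = (\<Sum>j<CARD('n). (snd P)^j *\<^sub>R flag_basis (fst P) ! j)"

lemma eventually_sgn_det_flag_curve:
  fixes F :: "('n::enum) oflag"
  assumes "is_oflag F" "length bs + Suc (length X) = CARD('n)"
    and "rows_det (flag_join bs F @ X) \<noteq> 0"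
  shows "eventually (\<lambda>\<eta>. sgn (rows_det (bs @ flag_curve (F, \<eta>) # X)) = sgn (rows_det (flag_join bs F @ X)))
           (at_right 0)"
proof -
  obtain j where j: "j < CARD('n)" "\<forall>i<j. flag_basis F ! i \<in> span (set bs)"
      "flag_join bs F = bs @ [flag_basis F ! j]"
    using flag_join_eq_basis_vector[OF assms(1), of bs] assms(2) by auto
  define c where "c i = rows_det (bs @ flag_basis F ! i # X)" for i
  have expand: "rows_det (bs @ flag_curve (F, \<eta>) # X) = (\<Sum>i<CARD('n). \<eta>^i * c i)" for \<eta>
    unfolding c_def flag_curve_def using rows_det_slot_sum[OF assms(2)] by simp
  have "\<forall>i<j. c i = 0" unfolding c_def using j(2) assms(2) by (auto intro: rows_det_slot_in_span)
  moreover have "c j = rows_det (flag_join bs F @ X)" unfolding c_def j(3) by simp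
  ultimately show ?thesis
    using eventually_sgn_poly_at_right[of j "CARD('n)" c] j(1) assms(3) unfolding expand by simp
qed

text \<open>"For eta_{k-1} small enough, ..., for eta_0 small enough, P holds": the parameters of
  later flags are fixed before those of earlier ones.\<close>

fun nested_eventually :: "nat \<Rightarrow> (real list \<Rightarrow> bool) \<Rightarrow> bool" where
  "nested_eventually 0 P = P []"
| "nested_eventually (Suc k) P = nested_eventually k (\<lambda>r. eventually (\<lambda>x. P (x # r)) (at_right 0))"

lemma nested_eventually_mono:
  "nested_eventually k P \<Longrightarrow> (\<And>xs. P xs \<Longrightarrow> Q xs) \<Longrightarrow> nested_eventually k Q"
proof (induction k arbitrary: P Q)
  case 0 then show ?case by simp
next
  case (Suc k)
  have "nested_eventually k (\<lambda>r. eventually (\<lambda>x. P (x # r)) (at_right 0))" using Suc.prems(1) by simp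
  then have "nested_eventually k (\<lambda>r. eventually (\<lambda>x. Q (x # r)) (at_right 0))"
    by (rule Suc.IH) (erule eventually_mono, rule Suc.prems(2))
  then show ?case by simp
qed

lemma nested_eventually_conj:
  "nested_eventually k P \<Longrightarrow> nested_eventually k Q \<Longrightarrow> nested_eventually k (\<lambda>xs. P xs \<and> Q xs)"
proof (induction k arbitrary: P Q)
  case 0 then show ?case by simp
next
  case (Suc k)
  have "nested_eventually k (\<lambda>r. eventually (\<lambda>x. P (x # r)) (at_right 0) \<and> eventually (\<lambda>x. Q (x # r)) (at_right 0))"
    using Suc by simp
  then have "nested_eventually k (\<lambda>r. eventually (\<lambda>x. P (x # r) \<and> Q (x # r)) (at_right 0))"
    by (rule nested_eventually_mono) (simp add: eventually_conj_iff)
  then show ?case by simp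
qed

lemma nested_eventually_ex: "nested_eventually k P \<Longrightarrow> \<exists>xs. length xs = k \<and> P xs"
proof (induction k arbitrary: P)
  case 0 then show ?case by simp
next
  case (Suc k)
  then obtain r where r: "length r = k" "eventually (\<lambda>x. P (x # r)) (at_right (0::real))" by force
  then obtain x where "P (x # r)" using eventually_happens'[of "at_right (0::real)"] by force
  then show ?case using r by (intro exI[of _ "x # r"]) simp
qed

definition realises_brackets :: "(real,'n::enum) vec list \<Rightarrow> ('n oflag \<times> real) list \<Rightarrow> bool" where
  "realises_brackets bs Z \<longleftrightarrow> (\<forall>Qs\<in>set (subseqs Z). length bs + length Qs = CARD('n) \<longrightarrow>
      sgn (rows_det (bs @ map flag_curve Qs)) = Or (foldl flag_join bs (map fst Qs)))"

text \<open>Adding a flag F in front: subfamilies avoiding F are handled by the hypothesis for bs,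
  those containing F by the hypothesis for [bs,F] and the key step, for small parameters.\<close>

lemma realises_brackets_Cons_eventually:
  fixes F :: "('n::enum) oflag"
  assumes F: "is_oflag F" and flags: "\<forall>P\<in>set Z. is_oflag (fst P)" and bs: "lin_indep_list bs"
    and rest: "realises_brackets bs Z"
    and join: "length bs < CARD('n) \<longrightarrow> realises_brackets (flag_join bs F) Z"
  shows "eventually (\<lambda>\<eta>. realises_brackets bs ((F, \<eta>) # Z)) (at_right 0)"
proof -
  have "eventually (\<lambda>\<eta>. \<forall>Qs\<in>set (subseqs Z). length bs + Suc (length Qs) = CARD('n) \<longrightarrow>
        sgn (rows_det (bs @ flag_curve (F, \<eta>) # map flag_curve Qs))
          = Or (foldl flag_join (flag_join bs F) (map fst Qs))) (at_right 0)"
  proof (rule eventually_ball_finite[OF finite_set], rule ballI)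
    fix Qs assume Qs: "Qs \<in> set (subseqs Z)"
    show "eventually (\<lambda>\<eta>. length bs + Suc (length Qs) = CARD('n) \<longrightarrow>
        sgn (rows_det (bs @ flag_curve (F, \<eta>) # map flag_curve Qs))
          = Or (foldl flag_join (flag_join bs F) (map fst Qs))) (at_right 0)"
    proof (cases "length bs + Suc (length Qs) = CARD('n)")
      case False then show ?thesis by simp
    next
      case len: True
      have "set Qs \<subseteq> set Z" using Qs subseqs_powset[of Z] by blast
      then have Qs_flags: "\<forall>G\<in>set (map fst Qs). is_oflag G" using flags by auto
      have indep: "lin_indep_list (flag_join bs F)"
        using flag_join_independent[OF F bs] len by simp
      have sgn_eq: "sgn (rows_det (flag_join bs F @ map flag_curve Qs))
          = Or (foldl flag_join (flag_join bs F) (map fst Qs))"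
        using join Qs len unfolding realises_brackets_def by (simp add: flag_join_def)
      also have "\<dots> \<noteq> 0"
        using foldl_flag_join_det_nonzero[OF indep Qs_flags] len
        by (simp add: Or_eq_sgn_rows_det sgn_eq_0_iff flag_join_def)
      finally have "rows_det (flag_join bs F @ map flag_curve Qs) \<noteq> 0" by (simp add: sgn_eq_0_iff)
      then have "eventually (\<lambda>\<eta>. sgn (rows_det (bs @ flag_curve (F, \<eta>) # map flag_curve Qs))
          = sgn (rows_det (flag_join bs F @ map flag_curve Qs))) (at_right 0)"
        using eventually_sgn_det_flag_curve[OF F] len by simp
      then show ?thesis by (rule eventually_mono) (simp add: sgn_eq)
    qed
  qed
  then show ?thesis
    using rest by (auto elim!: eventually_mono simp: realises_brackets_def Let_def)
qed

lemma perturbation: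
  fixes Fs :: "('n::enum) oflag list" and bs :: "(real,'n) vec list"
  assumes "\<forall>F\<in>set Fs. is_oflag F" "lin_indep_list bs"
  shows "nested_eventually (length Fs) (\<lambda>\<eta>s. realises_brackets bs (zip Fs \<eta>s))"
  using assms
proof (induction Fs arbitrary: bs)
  case Nil
  then show ?case by (simp add: realises_brackets_def Or_eq_sgn_rows_det)
next
  case (Cons F Fs)
  have F: "is_oflag F" and Fs: "\<forall>G\<in>set Fs. is_oflag G" using Cons.prems(1) by auto
  have rest: "nested_eventually (length Fs) (\<lambda>r. realises_brackets bs (zip Fs r))"
    using Cons.IH[OF Fs Cons.prems(2)] .
  have join: "nested_eventually (length Fs)
      (\<lambda>r. length bs < CARD('n) \<longrightarrow> realises_brackets (flag_join bs F) (zip Fs r))"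
  proof (cases "length bs < CARD('n)")
    case True
    then have "lin_indep_list (flag_join bs F)" using flag_join_independent[OF F Cons.prems(2)] by simp
    then have "nested_eventually (length Fs) (\<lambda>r. realises_brackets (flag_join bs F) (zip Fs r))"
      by (rule Cons.IH[OF Fs])
    then show ?thesis by (rule nested_eventually_mono) simp
  next
    case False
    show ?thesis by (rule nested_eventually_mono[OF rest]) (use False in simp)
  qed
  have "nested_eventually (length Fs) (\<lambda>r. eventually (\<lambda>\<eta>. realises_brackets bs ((F, \<eta>) # zip Fs r)) (at_right 0))"
  proof (rule nested_eventually_mono[OF nested_eventually_conj[OF rest join]])
    fix r :: "real list"
    have "\<forall>P\<in>set (zip Fs r). is_oflag (fst P)" using Fs by (auto dest: set_zip_leftD)
    then show "realises_brackets bs (zip Fs r) \<and> (length bs < CARD('n) \<longrightarrow> realises_brackets (flag_join bs F) (zip Fs r))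
        \<Longrightarrow> eventually (\<lambda>\<eta>. realises_brackets bs ((F, \<eta>) # zip Fs r)) (at_right 0)"
      using realises_brackets_Cons_eventually[OF F _ Cons.prems(2)] by blast
  qed
  then show ?case by simp
qed

lemma flags_realised_by_vectors:
  fixes Fs :: "('n::enum) oflag list"
  assumes flags: "\<forall>F\<in>set Fs. is_oflag F"
  shows "\<exists>gs :: (real,'n) vec list. length gs = length Fs \<and> (\<forall>Qs. subseq Qs (zip Fs gs) \<and> length Qs = CARD('n) \<longrightarrow>
           rows_det (map snd Qs) \<noteq> 0 \<and> sgn (rows_det (map snd Qs)) = Or (flag_bracket (map fst Qs)))"
proof -
  obtain \<eta>s where len: "length \<eta>s = length Fs" and \<eta>s: "\<forall>Ps. subseq Ps (zip Fs \<eta>s) \<and> length Ps = CARD('n)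
      \<longrightarrow> sgn (rows_det (map flag_curve Ps)) = Or (flag_bracket (map fst Ps))"
    using nested_eventually_ex[OF perturbation[OF flags lin_indep_list_Nil]]
    by (auto simp: realises_brackets_def flag_bracket_def)
  define gs where "gs = map flag_curve (zip Fs \<eta>s)"
  have zip_gs: "zip Fs gs = map (\<lambda>P. (fst P, flag_curve P)) (zip Fs \<eta>s)"
    using len by (intro nth_equalityI) (auto simp: gs_def)
  show ?thesis
  proof (rule exI[of _ gs], intro conjI allI impI)
    show "length gs = length Fs" using len by (simp add: gs_def)
  next
    fix Qs assume Qs: "subseq Qs (zip Fs gs) \<and> length Qs = CARD('n)"
    then obtain N where N: "Qs = nths (zip Fs gs) N" using subseq_conv_nths by blast
    define Ps where "Ps = nths (zip Fs \<eta>s) N"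
    have Qs_Ps: "Qs = map (\<lambda>P. (fst P, flag_curve P)) Ps"
      by (simp only: N Ps_def zip_gs nths_map)
    have "subseq Ps (zip Fs \<eta>s)" unfolding Ps_def using subseq_conv_nths by blast
    then have sgn_eq: "sgn (rows_det (map snd Qs)) = Or (flag_bracket (map fst Qs))"
      using \<eta>s Qs Qs_Ps by (simp add: comp_def)
    have "set Qs \<subseteq> set (zip Fs gs)" unfolding N by (rule set_nths_subset)
    then have "\<forall>F\<in>set (map fst Qs). is_oflag F" using flags by (force dest: set_zip_leftD)
    then have "rows_det (flag_bracket (map fst Qs)) \<noteq> 0"
      unfolding flag_bracket_def using Qs by (intro foldl_flag_join_det_nonzero lin_indep_list_Nil) auto
    then show "rows_det (map snd Qs) \<noteq> 0"
      using sgn_eq by (auto simp: Or_eq_sgn_rows_det sgn_eq_0_iff)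
    show "sgn (rows_det (map snd Qs)) = Or (flag_bracket (map fst Qs))" by (rule sgn_eq)
  qed
qed

section \<open>Sign sums of planar configurations\<close>

text \<open>For a finite set of reals, the term of x in sum_x prod_{y<>x} sgn(x - y) is
  (-1)^(number of points above x); the terms alternate, so the sum vanishes for an even number
  of points.  Induction removes the two largest points, whose terms are 1 and -1.\<close>

lemma sign_sum_insert_top_two:
  fixes A :: "real set"
  assumes "finite A" "\<forall>x\<in>A. x < b" "b < c"
  shows "(\<Sum>x\<in>insert c (insert b A). \<Prod>y\<in>insert c (insert b A) - {x}. sgn (x - y))
       = (\<Sum>x\<in>A. \<Prod>y\<in>A - {x}. sgn (x - y))"
proof -
  let ?B = "insert c (insert b A)"
  have notin: "c \<notin> insert b A" "b \<notin> A" using assms by auto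
  have top: "(\<Prod>y\<in>?B - {c}. sgn (c - y)) = 1"
    by (rule prod.neutral) (use assms in \<open>auto simp: sgn_if\<close>)
  have "?B - {b} = insert c A" using notin assms(3) by auto
  moreover have "(\<Prod>y\<in>A. sgn (b - y)) = 1"
    by (rule prod.neutral) (use assms in auto)
  ultimately have second: "(\<Prod>y\<in>?B - {b}. sgn (b - y)) = -1"
    using assms notin by simp
  have lower: "(\<Prod>y\<in>?B - {x}. sgn (x - y)) = (\<Prod>y\<in>A - {x}. sgn (x - y))" if x: "x \<in> A" for x
  proof -
    have "?B - {x} = insert c (insert b (A - {x}))" using x notin by auto
    moreover have "x < b" "x < c" using x assms by auto
    ultimately show ?thesis using assms notin by simp
  qed
  have "(\<Sum>x\<in>?B. \<Prod>y\<in>?B - {x}. sgn (x - y))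
      = (\<Prod>y\<in>?B - {c}. sgn (c - y)) + (\<Prod>y\<in>?B - {b}. sgn (b - y)) + (\<Sum>x\<in>A. \<Prod>y\<in>?B - {x}. sgn (x - y))"
    using assms(1) notin by (simp add: add.assoc)
  also have "(\<Sum>x\<in>A. \<Prod>y\<in>?B - {x}. sgn (x - y)) = (\<Sum>x\<in>A. \<Prod>y\<in>A - {x}. sgn (x - y))"
    using lower by (rule sum.cong[OF refl])
  finally show ?thesis using top second by simp
qed

lemma sign_sum_even_set:
  fixes A :: "real set"
  assumes "finite A" "even (card A)"
  shows "(\<Sum>x\<in>A. \<Prod>y\<in>A - {x}. sgn (x - y)) = 0"
  using assms
proof (induction "card A" arbitrary: A rule: less_induct)
  case less
  show ?case
  proof (cases "A = {}")
    case True then show ?thesis by simp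
  next
    case False
    define c where "c = Max A"
    have c: "c \<in> A" "\<forall>y\<in>A. y \<le> c" using False less.prems by (auto simp: c_def)
    have "A \<noteq> {c}" using less.prems by auto
    then have ne: "A - {c} \<noteq> {}" using c by auto
    define b where "b = Max (A - {c})"
    have fin_c: "finite (A - {c})" using less.prems by simp
    have b: "b \<in> A - {c}" "\<forall>y\<in>A - {c}. y \<le> b"
      unfolding b_def using Max_in[OF fin_c ne] Max_ge[OF fin_c] by auto
    then have bc: "b < c" using c by force
    define A' where "A' = A - {b, c}"
    have A: "A = insert c (insert b A')" using b c by (auto simp: A'_def)
    have fin: "finite A'" using less.prems by (simp add: A'_def)
    have below: "\<forall>x\<in>A'. x < b" using b by (force simp: A'_def)
    have "card A = Suc (Suc (card A'))" using fin bc unfolding A by (simp add: A'_def)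
    then have "(\<Sum>x\<in>A'. \<Prod>y\<in>A' - {x}. sgn (x - y)) = 0"
      using less fin by auto
    then show ?thesis unfolding A using sign_sum_insert_top_two[OF fin below bc] by simp
  qed
qed

lemma sign_sum_even_indexed:
  fixes r :: "nat \<Rightarrow> real"
  assumes "inj_on r {..<m}" "even m"
  shows "(\<Sum>j<m. \<Prod>k\<in>{..<m}-{j}. sgn (r j - r k)) = 0"
proof -
  have "(\<Sum>j<m. \<Prod>k\<in>{..<m}-{j}. sgn (r j - r k)) = (\<Sum>j<m. \<Prod>y\<in>r`{..<m}-{r j}. sgn (r j - y))"
  proof (rule sum.cong[OF refl])
    fix j assume j: "j \<in> {..<m}"
    have img: "r`{..<m}-{r j} = r`({..<m}-{j})" using assms(1) j by (auto simp: inj_on_def)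
    have "inj_on r ({..<m}-{j})" using assms(1) by (rule inj_on_subset) auto
    then show "(\<Prod>k\<in>{..<m}-{j}. sgn (r j - r k)) = (\<Prod>y\<in>r`{..<m}-{r j}. sgn (r j - y))"
      unfolding img by (simp add: prod.reindex)
  qed
  also have "\<dots> = (\<Sum>x\<in>r`{..<m}. \<Prod>y\<in>r`{..<m}-{x}. sgn (x - y))"
    using assms(1) by (simp add: sum.reindex)
  also have "\<dots> = 0" by (rule sign_sum_even_set) (use assms in \<open>auto simp: card_image\<close>)
  finally show ?thesis .
qed

text \<open>Planar version for points in the half-plane b > 0 (together with the ray b = 0, a > 0):
  sgn(a_j b_k - b_j a_k) = sgn(r_j - r_k) for the cotangent-like coordinate r = a/b, with
  the ray sent beyond all other values.\<close>

lemma half_plane_sign_sum_even: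
  fixes a b :: "nat \<Rightarrow> real"
  assumes "even m"
    and half: "\<And>j. j < m \<Longrightarrow> b j > 0 \<or> (b j = 0 \<and> a j > 0)"
    and indep: "\<And>j k. j < m \<Longrightarrow> k < m \<Longrightarrow> j \<noteq> k \<Longrightarrow> a j * b k - b j * a k \<noteq> 0"
  shows "(\<Sum>j<m. \<Prod>k\<in>{..<m}-{j}. sgn (a j * b k - b j * a k)) = 0"
proof -
  define M where "M = 1 + (\<Sum>k<m. \<bar>a k / b k\<bar>)"
  have below_M: "a j / b j < M" if "j < m" for j
  proof -
    have "\<bar>a j / b j\<bar> \<le> (\<Sum>k<m. \<bar>a k / b k\<bar>)"
      by (rule member_le_sum) (use that in auto)
    then show ?thesis unfolding M_def by linarith
  qed
  define r where "r j = (if b j > 0 then a j / b j else M)" for j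
  have sgn_eq: "sgn (a j * b k - b j * a k) = sgn (r j - r k)"
    if jk: "j < m" "k < m" "j \<noteq> k" for j k
  proof -
    consider "b j > 0" "b k > 0" | "b j > 0" "b k = 0" "a k > 0" | "b j = 0" "a j > 0" "b k > 0"
      | "b j = 0" "b k = 0"
      using half[OF jk(1)] half[OF jk(2)] by auto
    then show ?thesis
    proof cases
      case 1
      have "a j * b k - b j * a k = (b j * b k) * (r j - r k)"
        using 1 by (simp add: r_def field_simps)
      then show ?thesis using 1 by (simp add: sgn_mult)
    next
      case 2
      then show ?thesis using below_M[OF jk(1)] by (simp add: r_def)
    next
      case 3
      then show ?thesis using below_M[OF jk(2)] by (simp add: r_def)
    qed (use indep[OF jk] in simp)
  qed
  have "inj_on r {..<m}"
  proof (rule inj_onI)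
    fix j k assume "j \<in> {..<m}" "k \<in> {..<m}" "r j = r k"
    then show "j = k" using sgn_eq[of j k] indep[of j k] by (metis diff_self lessThan_iff sgn_eq_0_iff)
  qed
  then have "(\<Sum>j<m. \<Prod>k\<in>{..<m}-{j}. sgn (r j - r k)) = 0"
    using assms(1) by (rule sign_sum_even_indexed)
  moreover have "(\<Prod>k\<in>{..<m}-{j}. sgn (a j * b k - b j * a k)) = (\<Prod>k\<in>{..<m}-{j}. sgn (r j - r k))"
    if "j < m" for j
    by (rule prod.cong[OF refl]) (use sgn_eq that in auto)
  ultimately show ?thesis by simp
qed

text \<open>Reflecting points through the origin multiplies the (j,k) minor by eps_j eps_k; for an
  even number of points the product of these factors over k <> j does not depend on j.\<close>

lemma prod_sign_flip_even:
  fixes \<epsilon> :: "nat \<Rightarrow> real"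
  assumes "even m" "j < m" "\<And>k. \<epsilon> k = 1 \<or> \<epsilon> k = -1"
  shows "(\<Prod>k\<in>{..<m}-{j}. \<epsilon> j * \<epsilon> k) = (\<Prod>k<m. \<epsilon> k)"
proof -
  have "(\<Prod>k\<in>{..<m}-{j}. \<epsilon> j * \<epsilon> k) = \<epsilon> j ^ (m - 1) * (\<Prod>k\<in>{..<m}-{j}. \<epsilon> k)"
    using assms(2) by (simp add: prod.distrib)
  also have "(\<Prod>k<m. \<epsilon> k) = \<epsilon> j * (\<Prod>k\<in>{..<m}-{j}. \<epsilon> k)"
    using assms(2) by (simp add: prod.remove)
  moreover have "\<epsilon> j ^ (m - 1) = \<epsilon> j"
  proof -
    have "odd (m - 1)" using assms(1,2) by simp
    then show ?thesis using assms(3)[of j] by (elim disjE) simp_all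
  qed
  ultimately show ?thesis by simp
qed

lemma planar_sign_sum_even:
  fixes a b :: "nat \<Rightarrow> real"
  assumes "even m"
    and indep: "\<And>j k. j < m \<Longrightarrow> k < m \<Longrightarrow> j \<noteq> k \<Longrightarrow> a j * b k - b j * a k \<noteq> 0"
  shows "(\<Sum>j<m. \<Prod>k\<in>{..<m}-{j}. sgn (a j * b k - b j * a k)) = 0"
proof -
  define \<epsilon> where "\<epsilon> j = (if b j > 0 \<or> (b j = 0 \<and> a j > 0) then 1 else -1::real)" for j
  define a' where "a' j = \<epsilon> j * a j" for j
  define b' where "b' j = \<epsilon> j * b j" for j
  have \<epsilon>: "\<epsilon> k = 1 \<or> \<epsilon> k = -1" for k by (simp add: \<epsilon>_def)
  have nonzero: "a j \<noteq> 0 \<or> b j \<noteq> 0" if "j < m" for j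
  proof -
    define k where "k = (if j = 0 then 1 else 0::nat)"
    have "m \<noteq> 1" using assms(1) by auto
    then have "k < m" "k \<noteq> j" using that by (auto simp: k_def)
    then show ?thesis using indep[of j k] that by auto
  qed
  have minor: "a j * b k - b j * a k = \<epsilon> j * \<epsilon> k * (a' j * b' k - b' j * a' k)" for j k
    using \<epsilon>[of j] \<epsilon>[of k] by (auto simp: a'_def b'_def algebra_simps)
  have "(\<Sum>j<m. \<Prod>k\<in>{..<m}-{j}. sgn (a' j * b' k - b' j * a' k)) = 0"
  proof (rule half_plane_sign_sum_even[OF assms(1)])
    show "b' j > 0 \<or> (b' j = 0 \<and> a' j > 0)" if "j < m" for j
      using nonzero[OF that] by (auto simp: a'_def b'_def \<epsilon>_def)
    show "a' j * b' k - b' j * a' k \<noteq> 0" if "j < m" "k < m" "j \<noteq> k" for j k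
      using indep[OF that] minor[of j k] by auto
  qed
  moreover have "(\<Prod>k\<in>{..<m}-{j}. sgn (a j * b k - b j * a k))
      = (\<Prod>k<m. \<epsilon> k) * (\<Prod>k\<in>{..<m}-{j}. sgn (a' j * b' k - b' j * a' k))" if j: "j < m" for j
  proof -
    have "sgn (\<epsilon> j * \<epsilon> k) = \<epsilon> j * \<epsilon> k" for k using \<epsilon>[of j] \<epsilon>[of k] by auto
    then have "(\<Prod>k\<in>{..<m}-{j}. sgn (a j * b k - b j * a k))
        = (\<Prod>k\<in>{..<m}-{j}. \<epsilon> j * \<epsilon> k) * (\<Prod>k\<in>{..<m}-{j}. sgn (a' j * b' k - b' j * a' k))"
      by (simp add: minor sgn_mult prod.distrib)
    then show ?thesis using prod_sign_flip_even[of m j \<epsilon>, OF assms(1) j \<epsilon>] by simp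
  qed
  ultimately show ?thesis by (simp add: sum_distrib_left[symmetric])
qed

section \<open>Vectors in general position and their Gale dual\<close>

definition in_general_position :: "(real,'n::enum) vec list \<Rightarrow> bool" where
  "in_general_position gs \<longleftrightarrow>
     (\<forall>j<length gs. \<forall>i<length gs - 1. rows_det (remove_nth i (remove_nth j gs)) \<noteq> 0)"

text \<open>The coefficient of g_k in the Cramer relation of the vectors other than g_j
  (and 0 for k = j).\<close>

definition cramer_coeff :: "(real,'n::enum) vec list \<Rightarrow> nat \<Rightarrow> nat \<Rightarrow> real" where
  "cramer_coeff gs j k = (if k = j then 0
     else if k < j then (-1)^k * rows_det (remove_nth k (remove_nth j gs))
     else (-1)^(k - 1) * rows_det (remove_nth (k - 1) (remove_nth j gs)))"

lemma cramer_coeff_diag[simp]: "cramer_coeff gs j j = 0"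
  by (simp add: cramer_coeff_def)

lemma cramer_coeff_skip_index:
  "cramer_coeff gs j (skip_index j i) = (-1)^i * rows_det (remove_nth i (remove_nth j gs))"
  by (simp add: cramer_coeff_def skip_index_def)

lemma cramer_coeff_relation:
  fixes gs :: "(real,'n::enum) vec list"
  assumes "length gs = CARD('n) + 2" "j < CARD('n) + 2"
    and "rows_det (remove_nth 0 (remove_nth j gs)) \<noteq> 0"
  shows "(\<Sum>k<CARD('n) + 2. cramer_coeff gs j k *\<^sub>R gs ! k) = 0"
proof -
  let ?hs = "remove_nth j gs"
  have j: "j < Suc (Suc CARD('n))" using assms(2) by simp
  have "(\<Sum>k<CARD('n) + 2. cramer_coeff gs j k *\<^sub>R gs ! k)
      = cramer_coeff gs j j *\<^sub>R gs ! j + (\<Sum>k\<in>{..<CARD('n) + 2} - {j}. cramer_coeff gs j k *\<^sub>R gs ! k)"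
    by (rule sum.remove) (use assms(2) in auto)
  also have "\<dots> = (\<Sum>k\<in>{..<Suc (Suc CARD('n))} - {j}. cramer_coeff gs j k *\<^sub>R gs ! k)"
    by simp
  also have "\<dots> = (\<Sum>i<Suc CARD('n). cramer_coeff gs j (skip_index j i) *\<^sub>R gs ! skip_index j i)"
    using sum.reindex_bij_betw[OF bij_skip_index[OF j], of "\<lambda>k. cramer_coeff gs j k *\<^sub>R gs ! k"]
    by simp
  also have "\<dots> = (\<Sum>i<Suc CARD('n). ((-1)^i * rows_det (remove_nth i ?hs)) *\<^sub>R ?hs ! i)"
    by (rule sum.cong[OF refl])
      (use assms in \<open>simp add: cramer_coeff_skip_index nth_remove_nth_skip_index\<close>)
  also have "\<dots> = 0" by (rule cramer_relation) (use assms in simp_all)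
  finally show ?thesis .
qed

lemma cramer_coeff_antisym:
  assumes "j < k" "k < length gs"
  shows "cramer_coeff gs k j = - ((-1)^(j + k)) * cramer_coeff gs j k"
proof -
  obtain k' where k': "k = Suc k'" using assms(1) by (cases k) auto
  have "rows_det (remove_nth (k - 1) (remove_nth j gs)) = rows_det (remove_nth j (remove_nth k gs))"
    using remove_nth_comm[OF assms] by simp
  then show ?thesis using assms(1) by (simp add: cramer_coeff_def k' power_add)
qed

lemma prod_sgn_cramer_coeff:
  assumes "j < Suc M"
  shows "(\<Prod>k\<in>{..<Suc M} - {j}. sgn (cramer_coeff gs j k))
       = (\<Prod>i<M. (-1)^i) * (\<Prod>i<M. sgn (rows_det (remove_nth i (remove_nth j gs))))"
proof -
  have "(\<Prod>k\<in>{..<Suc M} - {j}. sgn (cramer_coeff gs j k))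
      = (\<Prod>i<M. sgn (cramer_coeff gs j (skip_index j i)))"
    using prod.reindex_bij_betw[OF bij_skip_index[OF assms], of "\<lambda>k. sgn (cramer_coeff gs j k)"]
    by simp
  also have "\<dots> = (\<Prod>i<M. (-1)^i * sgn (rows_det (remove_nth i (remove_nth j gs))))"
    by (simp add: cramer_coeff_skip_index sgn_mult)
  finally show ?thesis by (simp add: prod.distrib)
qed

lemma general_position_relation_zero:
  fixes gs :: "(real,'n::enum) vec list"
  assumes len: "length gs = CARD('n) + 2" and gp: "in_general_position gs"
    and rel: "(\<Sum>k<CARD('n) + 2. \<mu> k *\<^sub>R gs ! k) = 0" and "\<mu> 0 = 0" "\<mu> 1 = 0"
    and k: "k < CARD('n) + 2"
  shows "\<mu> k = 0"
proof -
  have "rows_det (remove_nth 0 (remove_nth 1 gs)) \<noteq> 0"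
    using gp len unfolding in_general_position_def by simp
  then have basis: "rows_det (drop 2 gs) \<noteq> 0" using remove_nth_0_remove_nth_1[of gs] by simp
  have "(\<Sum>k<CARD('n) + 2. \<mu> k *\<^sub>R gs ! k)
      = \<mu> 0 *\<^sub>R gs ! 0 + (\<mu> 1 *\<^sub>R gs ! 1 + (\<Sum>k<CARD('n). \<mu> (Suc (Suc k)) *\<^sub>R gs ! Suc (Suc k)))"
    by (simp add: sum.lessThan_Suc_shift del: sum.lessThan_Suc)
  then have tail: "(\<Sum>k<CARD('n). \<mu> (Suc (Suc k)) *\<^sub>R drop 2 gs ! k) = 0"
    using assms len by simp
  have "\<forall>c. (\<Sum>k<CARD('n). c k *\<^sub>R drop 2 gs ! k) = 0 \<longrightarrow> (\<forall>k<CARD('n). c k = 0)"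
    using basis rows_det_nonzero_iff[of "drop 2 gs"] by blast
  then have "\<forall>k<CARD('n). \<mu> (Suc (Suc k)) = 0"
    using tail by (auto dest: spec[where x = "\<lambda>k. \<mu> (Suc (Suc k))"])
  then show ?thesis using assms k by (cases k; cases "k - 1") auto
qed

lemma orthogonal_pair_multiple:
  fixes s t a b :: real
  assumes "s * a + t * b = 0" "a \<noteq> 0 \<or> b \<noteq> 0"
  obtains c where "s = - c * b" "t = c * a"
proof (cases "a = 0")
  case True
  then have "t = 0" using assms by simp
  then show ?thesis using True assms by (intro that[of "- s / b"]) auto
next
  case False
  show ?thesis using assms False by (intro that[of "t / a"]) (auto simp: field_simps)
qed

text \<open>A square matrix with zero diagonal, nonzero off-diagonal entries and all rows in the span
  of the first two is, entrywise, a row scaling of the 2x2 minors of its first two rows; with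
  the sign symmetry of Cramer coefficients the scaling factors are (-1)^j times a constant.\<close>

lemma zero_diagonal_rank_two_signs:
  fixes L :: "nat \<Rightarrow> nat \<Rightarrow> real"
  assumes "1 < m"
    and diag: "\<And>j. L j j = 0"
    and offdiag: "\<And>j k. j < m \<Longrightarrow> k < m \<Longrightarrow> j \<noteq> k \<Longrightarrow> L j k \<noteq> 0"
    and span: "\<And>j k. j < m \<Longrightarrow> k < m \<Longrightarrow> L j k = s j * L 0 k + t j * L 1 k"
    and sym: "\<And>k. 0 < k \<Longrightarrow> k < m \<Longrightarrow> L k 0 = - ((-1)^k) * L 0 k"
  obtains C where
    "\<And>j k. j < m \<Longrightarrow> k < m \<Longrightarrow> j \<noteq> k \<Longrightarrow> L 0 j * L 1 k - L 1 j * L 0 k \<noteq> 0"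
    "\<And>j k. j < m \<Longrightarrow> k < m \<Longrightarrow> sgn (L j k) = (-1)^j * C * sgn (L 0 j * L 1 k - L 1 j * L 0 k)"
proof -
  define w where "w j k = L 0 j * L 1 k - L 1 j * L 0 k" for j k
  have "\<exists>c. \<forall>k<m. L j k = c * w j k" if j: "j < m" for j
  proof -
    define i where "i = (if j = 0 then 1 else 0::nat)"
    have "i < m" "i \<noteq> j" using assms(1) by (auto simp: i_def)
    then have "L i j \<noteq> 0" using offdiag j by blast
    then have "L 0 j \<noteq> 0 \<or> L 1 j \<noteq> 0" by (auto simp: i_def split: if_splits)
    moreover have "s j * L 0 j + t j * L 1 j = 0" using span[OF j j] diag by simp
    ultimately obtain c where "s j = - c * L 1 j" "t j = c * L 0 j"
      using orthogonal_pair_multiple by blast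
    then show ?thesis using span[OF j] by (auto simp: w_def algebra_simps)
  qed
  then obtain c where c: "\<And>j k. j < m \<Longrightarrow> k < m \<Longrightarrow> L j k = c j * w j k" by metis
  have w_nz: "w j k \<noteq> 0" if "j < m" "k < m" "j \<noteq> k" for j k
    using offdiag[OF that] c[OF that(1,2)] by auto
  have c_alt: "c k = (-1)^k * c 0" if k: "k < m" for k
  proof (cases "k = 0")
    case True then show ?thesis by simp
  next
    case False
    have "c k * w k 0 = - ((-1)^k) * (c 0 * w 0 k)"
      using sym[of k] c[OF k, of 0] c[OF _ k, of 0] False k assms(1) by simp
    moreover have "w k 0 = - w 0 k" by (simp add: w_def)
    ultimately have "c k * w 0 k = ((-1)^k * c 0) * w 0 k" by simp
    then show ?thesis using w_nz[of 0 k] False k by simp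
  qed
  show ?thesis
  proof (rule that[of "sgn (c 0)"])
    show "L 0 j * L 1 k - L 1 j * L 0 k \<noteq> 0" if "j < m" "k < m" "j \<noteq> k" for j k
      using w_nz[OF that] by (simp add: w_def)
    show "sgn (L j k) = (-1)^j * sgn (c 0) * sgn (L 0 j * L 1 k - L 1 j * L 0 k)"
      if "j < m" "k < m" for j k
      using c[OF that] c_alt[OF that(1)] by (simp add: w_def sgn_mult)
  qed
qed

lemma general_position_minor_nonzero:
  fixes gs :: "(real,'n::enum) vec list"
  assumes "length gs = CARD('n) + 2" "in_general_position gs" "j < CARD('n) + 2" "i < CARD('n) + 1"
  shows "rows_det (remove_nth i (remove_nth j gs)) \<noteq> 0"
  using assms unfolding in_general_position_def by auto

lemma cramer_coeff_nonzero:
  fixes gs :: "(real,'n::enum) vec list"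
  assumes "length gs = CARD('n) + 2" "in_general_position gs"
    and "j < CARD('n) + 2" "k < CARD('n) + 2" "j \<noteq> k"
  shows "cramer_coeff gs j k \<noteq> 0"
  using general_position_minor_nonzero[OF assms(1,2,3), of k]
    general_position_minor_nonzero[OF assms(1,2,3), of "k - 1"] assms(3-5)
  by (auto simp: cramer_coeff_def)

text \<open>Each Cramer relation is a combination of the first two, since relations form a
  2-dimensional space.\<close>

lemma cramer_coeff_row_span:
  fixes gs :: "(real,'n::enum) vec list"
  assumes len: "length gs = CARD('n) + 2" and gp: "in_general_position gs"
    and j: "j < CARD('n) + 2" and k: "k < CARD('n) + 2"
  shows "cramer_coeff gs j k = (cramer_coeff gs j 1 / cramer_coeff gs 0 1) * cramer_coeff gs 0 k
           + (cramer_coeff gs j 0 / cramer_coeff gs 1 0) * cramer_coeff gs 1 k"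
    (is "?L j k = ?s * ?L 0 k + ?t * ?L 1 k")
proof -
  let ?m = "CARD('n) + 2"
  have rel: "(\<Sum>k<?m. ?L i k *\<^sub>R gs ! k) = 0" if "i < ?m" for i
    using cramer_coeff_relation[OF len that] general_position_minor_nonzero[OF len gp that, of 0]
    by simp
  define \<mu> where "\<mu> k = ?L j k - ?s * ?L 0 k - ?t * ?L 1 k" for k
  have "(\<Sum>k<?m. \<mu> k *\<^sub>R gs ! k) = (\<Sum>k<?m. ?L j k *\<^sub>R gs ! k)
      - ?s *\<^sub>R (\<Sum>k<?m. ?L 0 k *\<^sub>R gs ! k) - ?t *\<^sub>R (\<Sum>k<?m. ?L 1 k *\<^sub>R gs ! k)"
    by (simp add: \<mu>_def scaleR_diff_left scaleR_sum_right sum_subtractf del: sum.lessThan_Suc)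
  also have "\<dots> = 0" using rel[OF j] rel[of 0] rel[of 1] by simp
  finally have "(\<Sum>k<?m. \<mu> k *\<^sub>R gs ! k) = 0" .
  moreover have "?L 0 1 \<noteq> 0" "?L 1 0 \<noteq> 0" using cramer_coeff_nonzero[OF len gp] by auto
  then have "\<mu> 0 = 0" "\<mu> 1 = 0" by (simp_all add: \<mu>_def)
  ultimately have "\<mu> k = 0" by (rule general_position_relation_zero[OF len gp _ _ _ k])
  then show ?thesis by (simp add: \<mu>_def)
qed

lemma cramer_coeff_gale_form:
  fixes gs :: "(real,'n::enum) vec list"
  assumes len: "length gs = CARD('n) + 2" and gp: "in_general_position gs"
  obtains a b :: "nat \<Rightarrow> real" and C :: real where
    "\<And>j k. j < CARD('n) + 2 \<Longrightarrow> k < CARD('n) + 2 \<Longrightarrow> j \<noteq> k \<Longrightarrow> a j * b k - b j * a k \<noteq> 0"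
    "\<And>j k. j < CARD('n) + 2 \<Longrightarrow> k < CARD('n) + 2 \<Longrightarrow>
       sgn (cramer_coeff gs j k) = (-1)^j * C * sgn (a j * b k - b j * a k)"
proof -
  let ?m = "CARD('n) + 2" and ?L = "cramer_coeff gs"
  have sym: "?L k 0 = - ((-1)^k) * ?L 0 k" if "0 < k" "k < ?m" for k
    using cramer_coeff_antisym[of 0 k gs] that len by simp
  have "1 < ?m" by simp
  then show ?thesis
  proof (rule zero_diagonal_rank_two_signs[OF _ cramer_coeff_diag cramer_coeff_nonzero[OF len gp]
        cramer_coeff_row_span[OF len gp] sym])
    fix C
    assume "\<And>j k. j < ?m \<Longrightarrow> k < ?m \<Longrightarrow> j \<noteq> k \<Longrightarrow> ?L 0 j * ?L 1 k - ?L 1 j * ?L 0 k \<noteq> 0"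
      and "\<And>j k. j < ?m \<Longrightarrow> k < ?m \<Longrightarrow>
        sgn (?L j k) = (-1)^j * C * sgn (?L 0 j * ?L 1 k - ?L 1 j * ?L 0 k)"
    then show thesis by (rule that[of "?L 0" "?L 1" C])
  qed
qed

lemma general_position_sign_sum:
  fixes gs :: "(real,'n::enum) vec list"
  assumes even: "even CARD('n)" and len: "length gs = CARD('n) + 2"
    and gp: "in_general_position gs"
  shows "(\<Sum>j<CARD('n) + 2. (-1)^j *
           (\<Prod>i<CARD('n) + 1. sgn (rows_det (remove_nth i (remove_nth j gs))))) = 0"
proof -
  define m where "m = CARD('n) + 2"
  define P where "P j = (\<Prod>i<CARD('n) + 1. sgn (rows_det (remove_nth i (remove_nth j gs))))" for j
  define K :: real where "K = (\<Prod>i<CARD('n) + 1. (-1)^i)"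
  have KK: "K * K = 1"
    unfolding K_def prod.distrib[symmetric] by (simp flip: power_add power_mult_distrib)
  obtain a b C where cross_nz:
      "\<And>j k. j < m \<Longrightarrow> k < m \<Longrightarrow> j \<noteq> k \<Longrightarrow> a j * b k - b j * a k \<noteq> 0"
    and sgn_coeff: "\<And>j k. j < m \<Longrightarrow> k < m \<Longrightarrow>
       sgn (cramer_coeff gs j k) = (-1)^j * C * sgn (a j * b k - b j * a k)"
    using cramer_coeff_gale_form[OF len gp] unfolding m_def by blast
  have sign_power: "(-1::real)^j * ((-1)^j * C) ^ (m - 1) = C ^ (m - 1)" for j
  proof -
    have "(-1::real)^j * ((-1)^j) ^ (m - 1) = ((-1)^m)^j"
      by (simp add: m_def power_mult[symmetric] mult.commute)
    also have "\<dots> = 1" using even by (simp add: m_def)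
    finally show ?thesis by (simp add: power_mult_distrib mult.assoc[symmetric])
  qed
  have summand: "(-1)^j * P j = K * C ^ (m - 1) * (\<Prod>k\<in>{..<m} - {j}. sgn (a j * b k - b j * a k))"
    (is "_ = _ * ?\<Pi>") if j: "j < m" for j
  proof -
    have "K * P j = (\<Prod>k\<in>{..<m} - {j}. sgn (cramer_coeff gs j k))"
      using prod_sgn_cramer_coeff[of j "CARD('n) + 1" gs] j
      by (simp add: K_def P_def m_def del: prod.lessThan_Suc)
    also have "\<dots> = (\<Prod>k\<in>{..<m} - {j}. ((-1)^j * C) * sgn (a j * b k - b j * a k))"
      by (rule prod.cong[OF refl]) (use sgn_coeff j in auto)
    also have "\<dots> = ((-1)^j * C) ^ (m - 1) * (\<Prod>k\<in>{..<m} - {j}. sgn (a j * b k - b j * a k))"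
      using j by (simp add: prod.distrib)
    finally have KP: "K * P j = ((-1)^j * C) ^ (m - 1) * ?\<Pi>" .
    have "(-1)^j * P j = (K * K) * ((-1)^j * P j)" using KK by simp
    also have "\<dots> = K * ((-1)^j * (K * P j))" by (simp only: mult_ac)
    also have "\<dots> = K * (((-1)^j * ((-1)^j * C) ^ (m - 1)) * ?\<Pi>)" unfolding KP by (simp only: mult.assoc)
    also have "\<dots> = K * C ^ (m - 1) * ?\<Pi>" unfolding sign_power by (simp only: mult.assoc)
    finally show ?thesis .
  qed
  have "(\<Sum>j<m. (-1)^j * P j) = K * C ^ (m - 1) * (\<Sum>j<m. \<Prod>k\<in>{..<m} - {j}. sgn (a j * b k - b j * a k))"
    unfolding sum_distrib_left by (rule sum.cong) (simp_all add: summand)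
  also have "(\<Sum>j<m. \<Prod>k\<in>{..<m} - {j}. sgn (a j * b k - b j * a k)) = 0"
    by (rule planar_sign_sum_even) (use even cross_nz in \<open>auto simp: m_def\<close>)
  finally show ?thesis by (simp add: m_def P_def)
qed

lemma flags_realised_in_general_position:
  fixes Fs :: "('n::enum) oflag list"
  assumes len: "length Fs = CARD('n) + 2" and flags: "\<forall>F\<in>set Fs. is_oflag F"
  obtains gs :: "(real,'n) vec list" where "length gs = CARD('n) + 2" "in_general_position gs"
    "\<And>i j. j < CARD('n) + 2 \<Longrightarrow> i < CARD('n) + 1 \<Longrightarrow>
       Or (flag_bracket (remove_nth i (remove_nth j Fs))) = sgn (rows_det (remove_nth i (remove_nth j gs)))"
proof -
  obtain gs :: "(real,'n) vec list" where len_gs: "length gs = length Fs"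
    and gs: "\<And>Qs. subseq Qs (zip Fs gs) \<and> length Qs = CARD('n) \<Longrightarrow>
       rows_det (map snd Qs) \<noteq> 0 \<and> sgn (rows_det (map snd Qs)) = Or (flag_bracket (map fst Qs))"
    using flags_realised_by_vectors[OF flags] by blast
  have minor: "rows_det (remove_nth i (remove_nth j gs)) \<noteq> 0 \<and>
      sgn (rows_det (remove_nth i (remove_nth j gs))) = Or (flag_bracket (remove_nth i (remove_nth j Fs)))"
    if "j < CARD('n) + 2" "i < CARD('n) + 1" for i j
  proof -
    let ?Qs = "remove_nth i (remove_nth j (zip Fs gs))"
    have "subseq ?Qs (zip Fs gs)"
      using subseq_order.trans[OF subseq_remove_nth subseq_remove_nth] by blast
    moreover have "length ?Qs = CARD('n)" using that len_gs len by simp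
    moreover have "map fst ?Qs = remove_nth i (remove_nth j Fs)"
      "map snd ?Qs = remove_nth i (remove_nth j gs)"
      using len_gs by (simp_all flip: map_remove_nth)
    ultimately show ?thesis using gs by metis
  qed
  show ?thesis
  proof (rule that)
    show "length gs = CARD('n) + 2" using len_gs len by simp
    then show "in_general_position gs" using minor unfolding in_general_position_def by simp
  qed (use minor in simp)
qed

theorem theorem4p2:
  fixes Fs :: "('n::enum) oflag list"
  assumes "even CARD('n)"
    and "length Fs = CARD('n) + 2"
    and "\<forall>F\<in>set Fs. is_oflag F"
  shows "dE_fun Fs = 0"
proof -
  obtain gs :: "(real,'n) vec list" where len: "length gs = CARD('n) + 2"
    and gp: "in_general_position gs"
    and minors: "\<And>i j. j < CARD('n) + 2 \<Longrightarrow> i < CARD('n) + 1 \<Longrightarrow>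
       Or (flag_bracket (remove_nth i (remove_nth j Fs))) = sgn (rows_det (remove_nth i (remove_nth j gs)))"
    using flags_realised_in_general_position[OF assms(2,3)] by blast
  have "dE_fun Fs = (\<Sum>j<CARD('n) + 2. (-1)^j *
      (\<Prod>i<CARD('n) + 1. Or (flag_bracket (remove_nth i (remove_nth j Fs)))))"
    unfolding dE_fun_def E_fun_def assms(2) by (rule sum.cong) (simp_all add: assms(2))
  also have "\<dots> = (\<Sum>j<CARD('n) + 2. (-1)^j *
      (\<Prod>i<CARD('n) + 1. sgn (rows_det (remove_nth i (remove_nth j gs)))))"
    using minors by (intro sum.cong prod.cong arg_cong[where f = "\<lambda>x. _ * x"]) auto
  also have "\<dots> = 0"
    by (rule general_position_sign_sum[OF assms(1) len gp])
  finally show ?thesis .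
qed

end
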